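(* Let $(\mathcal S,\mathcal C,\mathcal R,\mathcal K)$ be a mass-action ACR system with ODE $x'(t)=f(x(t))$ and species $\mathcal S=\{S_1,\dots,S_d,S_{d+1},\dots,S_{d+r}\}$, admitting conservation laws $u^i\cdot x(t)=u^i\cdot x(0)=M_i$ for all $t$, $i=1,\dots,k$, with $u^i\in\mathbb R^{d+r}_{>0}$. Split $\mathcal S$ into $\mathcal S_L=\{S_1,\dots,S_d\}$ and $\mathcal S_H=\{S_{d+1},\dots,S_{d+r}\}$, where no species in $\mathcal S_H$ is an ACR species. Let $\{x^*(M): M=(M_1,\dots,M_k)\in\mathbb R^k_{>0}\}$ be the family of positive steady states, $x^*(M)$ lying in the stoichiometry class with conserved quantities $M$. Suppose for the solution $x(t)$ there is $\widetilde M=(\widetilde M_1,\dots,\widetilde M_k)$ such that $x_{d+i}(0)=x^*_{d+i}(\widetilde M)$ for $i=1,\dots,r$. Then the projected system $(\mathcal S_L,\mathcal C_L,\mathcal R_L,\mathcal K_L)$ with initial condition $q_L(x(0))$ has a positive steady state at $\bar x^*=q_L(x^*(\widetilde M))$. In particular, if $S_i\in\mathcal S_L$ is an ACR species with ACR value $x^*_i$, then $\bar x^*_i=x^*_i$.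
   Context: An ACR system is a deterministic system admitting a positive steady state in which some species (an ACR species) takes the same value (its ACR value) at every positive steady state. For $v\in\mathbb Z^{d+r}$, $q_L(v)=(v_1,\dots,v_d)$ and $q_H(v)=(v_{d+1},\dots,v_{d+r})$. The projected network (freezing the species of $\mathcal S_H$ at their initial values) has species $\mathcal S_L$, complexes $q_L(y)$ for $y\in\mathcal C$, and reactions $q_L(y)\to q_L(y')$ for each $y\to y'\in\mathcal R$ with $q_L(y')\ne q_L(y)$; the rate constant of a projected reaction $\bar y\to\bar y'$ is $\sum\kappa_{y\to y'}\,q_H(x(0))^{q_H(y)}$, summed over all $y\to y'\in\mathcal R$ with $q_L(y)=\bar y$, $q_L(y')=\bar y'$ (with $u^v=\prod u_i^{v_i}$, $0^0=1$). The projected system is the mass-action deterministic system of this network; equivalently its vector field is $\bar f_i(x_1,\dots,x_d)=f_i(x_1,\dots,x_d,x_{d+1}(0),\dots,x_{d+r}(0))$, $i=1,\dots,d$. *)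

theory Defs
  imports Complex_Main
begin

text \<open>Species are indexed 0..<n (0-based).\<close>

type_synonym complex = "nat \<Rightarrow> nat"
type_synonym reaction = "complex \<times> complex"

definition well_formed_network :: "nat \<Rightarrow> reaction set \<Rightarrow> (reaction \<Rightarrow> real) \<Rightarrow> bool" where
  "well_formed_network n R \<kappa> \<longleftrightarrow> finite R \<and>
     (\<forall>(y, y') \<in> R. y \<noteq> y' \<and> (\<forall>i\<ge>n. y i = 0 \<and> y' i = 0)) \<and>
     (\<forall>rc\<in>R. \<kappa> rc > 0)"

text \<open>Monomial u^v = prod u_i^v_i over the n species (0^0 = 1).\<close>
definition monom_pow :: "nat \<Rightarrow> (nat \<Rightarrow> real) \<Rightarrow> complex \<Rightarrow> real" where
  "monom_pow n x y = (\<Prod>i<n. x i ^ y i)"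

definition mass_action :: "nat \<Rightarrow> reaction set \<Rightarrow> (reaction \<Rightarrow> real) \<Rightarrow> (nat \<Rightarrow> real) \<Rightarrow> nat \<Rightarrow> real" where
  "mass_action n R \<kappa> x i =
     (\<Sum>(y, y') \<in> R. \<kappa> (y, y') * monom_pow n x y * (real (y' i) - real (y i)))"

definition positive_steady_state :: "nat \<Rightarrow> ((nat \<Rightarrow> real) \<Rightarrow> nat \<Rightarrow> real) \<Rightarrow> (nat \<Rightarrow> real) \<Rightarrow> bool" where
  "positive_steady_state n f x \<longleftrightarrow> (\<forall>i<n. x i > 0) \<and> (\<forall>i<n. f x i = 0)"

definition ACR_value :: "nat \<Rightarrow> ((nat \<Rightarrow> real) \<Rightarrow> nat \<Rightarrow> real) \<Rightarrow> nat \<Rightarrow> real \<Rightarrow> bool" where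
  "ACR_value n f i c \<longleftrightarrow> (\<exists>x. positive_steady_state n f x) \<and>
     (\<forall>x. positive_steady_state n f x \<longrightarrow> x i = c)"

definition ACR_species :: "nat \<Rightarrow> ((nat \<Rightarrow> real) \<Rightarrow> nat \<Rightarrow> real) \<Rightarrow> nat \<Rightarrow> bool" where
  "ACR_species n f i \<longleftrightarrow> (\<exists>c. ACR_value n f i c)"

definition ACR_system :: "nat \<Rightarrow> ((nat \<Rightarrow> real) \<Rightarrow> nat \<Rightarrow> real) \<Rightarrow> bool" where
  "ACR_system n f \<longleftrightarrow> (\<exists>x. positive_steady_state n f x) \<and> (\<exists>i<n. ACR_species n f i)"

definition qL :: "nat \<Rightarrow> (nat \<Rightarrow> 'a::zero) \<Rightarrow> nat \<Rightarrow> 'a" where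
  "qL d v = (\<lambda>i. if i < d then v i else 0)"

definition qH :: "nat \<Rightarrow> nat \<Rightarrow> (nat \<Rightarrow> 'a::zero) \<Rightarrow> nat \<Rightarrow> 'a" where
  "qH d r v = (\<lambda>j. if j < r then v (d + j) else 0)"

definition proj_reactions :: "nat \<Rightarrow> reaction set \<Rightarrow> reaction set" where
  "proj_reactions d R = {(qL d y, qL d y') | y y'. (y, y') \<in> R \<and> qL d y' \<noteq> qL d y}"

text \<open>Projected rate constants, with the H-species frozen at x0 = q_H(x(0)).\<close>
definition proj_rates :: "nat \<Rightarrow> nat \<Rightarrow> reaction set \<Rightarrow> (reaction \<Rightarrow> real) \<Rightarrow> (nat \<Rightarrow> real)
     \<Rightarrow> reaction \<Rightarrow> real" where
  "proj_rates d r R \<kappa> x0 = (\<lambda>(yb, yb').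
     \<Sum>(y, y') \<in> {rc \<in> R. qL d (fst rc) = yb \<and> qL d (snd rc) = yb'}.
        \<kappa> (y, y') * monom_pow r (qH d r x0) (qH d r y))"

definition proj_system :: "nat \<Rightarrow> nat \<Rightarrow> reaction set \<Rightarrow> (reaction \<Rightarrow> real) \<Rightarrow> (nat \<Rightarrow> real)
     \<Rightarrow> (nat \<Rightarrow> real) \<Rightarrow> nat \<Rightarrow> real" where
  "proj_system d r R \<kappa> x0 = mass_action d (proj_reactions d R) (proj_rates d r R \<kappa> x0)"

end

theory Submission
  imports Defs
begin

text \<open>Freezing the species of \<open>S\<^sub>H\<close> at \<open>q\<^sub>H(x(0))\<close> turns the projected vector field into the
  restriction of the original one: \<open>f\<^sub>i(q\<^sub>L z) = f\<^sub>i(z)\<close> for \<open>i < d\<close> whenever \<open>z\<close> agrees with \<open>x(0)\<close>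
  on \<open>S\<^sub>H\<close>. Indeed each projected monomial times the frozen factor \<open>q\<^sub>H(x(0))\<^bsup>q\<^sub>H(y)\<^esup>\<close> in its rate
  constant is the full monomial \<open>z\<^sup>y\<close>, and the reactions discarded by the projection
  (\<open>q\<^sub>L y = q\<^sub>L y'\<close>) contribute nothing to the \<open>S\<^sub>L\<close>-coordinates. Since by hypothesis \<open>x(0)\<close> agrees with
  the positive steady state \<open>x\<^sup>*(M)\<close> on \<open>S\<^sub>H\<close>, its \<open>q\<^sub>L\<close>-part is a positive steady state of the
  projected system.\<close>

lemma prod_lessThan_add:
  fixes g :: "nat \<Rightarrow> 'a::comm_monoid_mult"
  shows "(\<Prod>i<d + r. g i) = (\<Prod>i<d. g i) * (\<Prod>j<r. g (d + j))"
  by (induction r) (auto simp: mult.assoc)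

lemma monom_pow_qL_mult_qH:
  assumes "\<forall>j<r. x0 (d + j) = z (d + j)"
  shows "monom_pow d (qL d z) (qL d y) * monom_pow r (qH d r x0) (qH d r y)
           = monom_pow (d + r) z y"
proof -
  have "monom_pow d (qL d z) (qL d y) = (\<Prod>i<d. z i ^ y i)"
    unfolding monom_pow_def qL_def by (rule prod.cong) auto
  moreover have "monom_pow r (qH d r x0) (qH d r y) = (\<Prod>j<r. z (d + j) ^ y (d + j))"
    unfolding monom_pow_def qH_def using assms by (intro prod.cong) auto
  ultimately show ?thesis
    unfolding monom_pow_def by (simp add: prod_lessThan_add)
qed

lemma proj_rates_mult_monom_pow:
  assumes "\<forall>j<r. x0 (d + j) = z (d + j)"
  shows "proj_rates d r R \<kappa> x0 (yb, yb') * monom_pow d (qL d z) yb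
           = (\<Sum>(y, y') \<in> {rc \<in> R. qL d (fst rc) = yb \<and> qL d (snd rc) = yb'}.
                \<kappa> (y, y') * monom_pow (d + r) z y)"
  unfolding proj_rates_def case_prod_unfold sum_distrib_right
  by (rule sum.cong)
     (auto simp: monom_pow_qL_mult_qH[OF assms, symmetric] mult.assoc)

lemma proj_system_qL_eq_mass_action:
  assumes "finite R" and "\<forall>j<r. x0 (d + j) = z (d + j)" and "i < d"
  shows "proj_system d r R \<kappa> x0 (qL d z) i = mass_action (d + r) R \<kappa> z i"
proof -
  define q where "q = (\<lambda>rc :: reaction. (qL d (fst rc), qL d (snd rc)))"
  define F where "F = (\<lambda>(yb, yb'). proj_rates d r R \<kappa> x0 (yb, yb') * monom_pow d (qL d z) yb
                                      * (real (yb' i) - real (yb i)))"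
  define h where "h = (\<lambda>(y, y'). \<kappa> (y, y') * monom_pow (d + r) z y * (real (y' i) - real (y i)))"
  have qL_i: "qL d y i = y i" for y :: complex
    using \<open>i < d\<close> by (simp add: qL_def)
  have fin: "finite (q ` R)"
    using \<open>finite R\<close> by simp
  have "proj_system d r R \<kappa> x0 (qL d z) i = sum F (proj_reactions d R)"
    unfolding proj_system_def mass_action_def F_def ..
  also have "\<dots> = sum F (q ` R)"
  proof (rule sum.mono_neutral_left[OF fin])
    show "proj_reactions d R \<subseteq> q ` R"
      unfolding proj_reactions_def q_def by (auto intro: rev_image_eqI)
    show "\<forall>p \<in> q ` R - proj_reactions d R. F p = 0"
    proof
      fix p assume "p \<in> q ` R - proj_reactions d R"
      then obtain yb where "p = (yb, yb)"
        unfolding proj_reactions_def q_def by auto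
      then show "F p = 0"
        by (simp add: F_def)
    qed
  qed
  also have "\<dots> = (\<Sum>p \<in> q ` R. sum h {rc \<in> R. q rc = p})"
  proof (rule sum.cong[OF refl])
    fix p :: reaction
    obtain yb yb' where p: "p = (yb, yb')"
      by (cases p)
    have fibre: "{rc \<in> R. qL d (fst rc) = yb \<and> qL d (snd rc) = yb'} = {rc \<in> R. q rc = p}"
      by (auto simp: p q_def)
    have "F p = (\<Sum>(y, y') \<in> {rc \<in> R. q rc = p}. \<kappa> (y, y') * monom_pow (d + r) z y)
                  * (real (yb' i) - real (yb i))"
      unfolding F_def p case_prod_conv proj_rates_mult_monom_pow[OF assms(2)] fibre ..
    also have "\<dots> = sum h {rc \<in> R. q rc = p}"
      unfolding sum_distrib_right
    proof (rule sum.cong[OF refl])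
      fix rc assume rc: "rc \<in> {rc \<in> R. q rc = p}"
      obtain y y' where "rc = (y, y')"
        by (cases rc)
      moreover from rc this have "yb = qL d y" "yb' = qL d y'"
        by (auto simp: p q_def)
      ultimately show "(case rc of (y, y') \<Rightarrow> \<kappa> (y, y') * monom_pow (d + r) z y)
                         * (real (yb' i) - real (yb i)) = h rc"
        by (simp add: h_def qL_i)
    qed
    finally show "F p = sum h {rc \<in> R. q rc = p}" .
  qed
  also have "\<dots> = sum h R"
    using sum.group[OF \<open>finite R\<close> fin] by blast
  also have "\<dots> = mass_action (d + r) R \<kappa> z i"
    unfolding mass_action_def h_def ..
  finally show ?thesis .
qed

lemma positive_steady_state_proj_system:
  assumes "finite R" and "\<forall>j<r. x0 (d + j) = z (d + j)"
    and "positive_steady_state (d + r) (mass_action (d + r) R \<kappa>) z"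
  shows "positive_steady_state d (proj_system d r R \<kappa> x0) (qL d z)"
  unfolding positive_steady_state_def
proof (intro conjI allI impI)
  fix i assume "i < d"
  with assms(3) show "qL d z i > 0"
    by (simp add: positive_steady_state_def qL_def)
next
  fix i assume "i < d"
  with assms(3) show "proj_system d r R \<kappa> x0 (qL d z) i = 0"
    using proj_system_qL_eq_mass_action[OF assms(1,2)] by (simp add: positive_steady_state_def)
qed

text \<open>Only the steady state \<open>x\<^sup>*(M)\<close> and the initial values on \<open>S\<^sub>H\<close> enter the proof.\<close>

theorem mainTheorem5:
  fixes d r k :: nat
    and R :: "reaction set" and \<kappa> :: "reaction \<Rightarrow> real"
    and u :: "nat \<Rightarrow> nat \<Rightarrow> real"
    and xs :: "(nat \<Rightarrow> real) \<Rightarrow> nat \<Rightarrow> real"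
    and x :: "real \<Rightarrow> nat \<Rightarrow> real"
    and Mt :: "nat \<Rightarrow> real"
  defines "f \<equiv> mass_action (d + r) R \<kappa>"
  assumes net: "well_formed_network (d + r) R \<kappa>"
    and acr: "ACR_system (d + r) f"
    and upos: "\<forall>j<k. \<forall>i<d + r. u j i > 0"
    and sol: "\<forall>t\<ge>0. \<forall>i<d + r. ((\<lambda>s. x s i) has_real_derivative f (x t) i) (at t within {0..})"
    and cons: "\<forall>t\<ge>0. \<forall>j<k. (\<Sum>i<d + r. u j i * x t i) = (\<Sum>i<d + r. u j i * x 0 i)"
    and H_not_ACR: "\<forall>i. d \<le> i \<and> i < d + r \<longrightarrow> \<not> ACR_species (d + r) f i"
    and family: "\<forall>M. (\<forall>j<k. M j > 0) \<longrightarrow>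
        positive_steady_state (d + r) f (xs M) \<and> (\<forall>j<k. (\<Sum>i<d + r. u j i * xs M i) = M j)"
    and Mt_pos: "\<forall>j<k. Mt j > 0"
    and init: "\<forall>i<r. x 0 (d + i) = xs Mt (d + i)"
  shows "positive_steady_state d (proj_system d r R \<kappa> (x 0)) (qL d (xs Mt)) \<and>
         (\<forall>i<d. \<forall>c. ACR_value (d + r) f i c \<longrightarrow> qL d (xs Mt) i = c)"
proof
  have steady: "positive_steady_state (d + r) f (xs Mt)"
    using family Mt_pos by blast
  have "finite R"
    using net by (simp add: well_formed_network_def)
  then show "positive_steady_state d (proj_system d r R \<kappa> (x 0)) (qL d (xs Mt))"
    using positive_steady_state_proj_system init steady unfolding f_def by blast
  show "\<forall>i<d. \<forall>c. ACR_value (d + r) f i c \<longrightarrow> qL d (xs Mt) i = c"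
    using steady by (auto simp: ACR_value_def qL_def)
qed

end
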